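(* Let $T$ be a real $n\times n$ orthogonal projection matrix (symmetric, $T^2=T$) of rank $k$ whose diagonal entries are all equal. Then for every $0<m<n$, every principal $m\times m$ submatrix $T'$ of $T$ satisfies $\operatorname{rank}(T')\ge m\cdot k/n$. *)

theory Defs
  imports "Jordan_Normal_Form.DL_Rank" "Jordan_Normal_Form.DL_Submatrix"
begin

end

theory Submission
  imports Defs "Jordan_Normal_Form.Gram_Schmidt" "HOL-Analysis.Convex"
begin

(* Expanding in an orthogonal basis U of the column space of a real square matrix A gives
   tr A = sum over u of <u, A u>/<u, u> and tr (A^T A) = sum over u of |A^T u|^2/<u, u>, so
   Cauchy-Schwarz in each summand and then for the sum yields
   (tr A)^2 <= rank A * tr (A^T A).  For idempotent A every u is fixed, whence tr A = rank A.
   If T is a symmetric idempotent with constant diagonal c, then n c = tr T = k.  A principal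
   submatrix B = T[I,I] has tr B = m c and tr (B^T B) = sum over i, j in I of T_ij^2, which is
   at most the sum over i in I of (T^T T)_ii = T_ii, i.e. at most tr B.  Hence
   (tr B)^2 <= rank B * tr B, so rank B >= tr B = m k / n. *)

(* The inner-product notation of HOL-Analysis clashes with scalar_prod. *)
unbundle no inner_syntax

definition trace :: "'a::comm_ring_1 mat \<Rightarrow> 'a" where
  "trace A = (\<Sum>i<dim_row A. A $$ (i, i))"

definition orthogonal_system :: "real vec set \<Rightarrow> bool" where
  "orthogonal_system U \<longleftrightarrow> (\<forall>u\<in>U. u \<bullet> u \<noteq> 0) \<and> (\<forall>u\<in>U. \<forall>v\<in>U. u \<noteq> v \<longrightarrow> u \<bullet> v = 0)"

lemma scalar_prod_self_ge_0:
  fixes x :: "real vec"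
  shows "0 \<le> x \<bullet> x"
  unfolding scalar_prod_def by (auto intro: sum_nonneg)

lemma Cauchy_Schwarz_scalar_prod:
  fixes x y :: "real vec"
  assumes "x \<in> carrier_vec n" "y \<in> carrier_vec n"
  shows "(x \<bullet> y)\<^sup>2 \<le> (x \<bullet> x) * (y \<bullet> y)"
  using Cauchy_Schwarz_ineq_sum[of "\<lambda>i. x $ i" "\<lambda>i. y $ i" "{0..<n}"] assms
  by (simp add: scalar_prod_def power2_eq_square)

lemma scalar_prod_carrier:
  assumes "y \<in> carrier_vec n"
  shows "x \<bullet> y = (\<Sum>i<n. x $ i * y $ i)"
  using assms by (simp add: scalar_prod_def atLeast0LessThan)

lemma diag_transpose_mult_self:
  fixes A :: "'a::comm_ring_1 mat"
  assumes "A \<in> carrier_mat nr nc" "i < nc"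
  shows "(A\<^sup>T * A) $$ (i, i) = (\<Sum>j<nr. (A $$ (j, i))\<^sup>2)"
  using assms by (simp add: scalar_prod_def atLeast0LessThan power2_eq_square)

context
  fixes n :: nat
begin

interpretation vec_space "TYPE(real)" n .

lemma span_maximal_lin_indpt_subset:
  assumes W: "W \<subseteq> carrier_vec n" and S: "maximal S (\<lambda>T. T \<subseteq> W \<and> lin_indpt T)"
  shows "span S = span W"
proof -
  have SW: "S \<subseteq> W" and Si: "lin_indpt S" using S unfolding maximal_def by auto
  have SC: "S \<subseteq> carrier_vec n" using SW W by auto
  have "W \<subseteq> span S"
  proof
    fix w assume w: "w \<in> W"
    show "w \<in> span S"
    proof (cases "w \<in> S")
      case True
      then show ?thesis using span_mem[OF SC] by auto
    next
      case False
      have "\<not> lin_indpt (insert w S)"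
        using S w SW False unfolding maximal_def by blast
      then show ?thesis using lin_dep_iff_in_span[OF SC Si _ False] w W by auto
    qed
  qed
  then show ?thesis using span_is_monotone[OF SW] span_subsetI[OF SC] by blast
qed

lemma orthogonal_basis_of_col_space:
  assumes A: "A \<in> carrier_mat n nc"
  obtains U where "finite U" "U \<subseteq> carrier_vec n" "orthogonal_system U"
    "card U = rank A" "span U = span (set (cols A))"
proof -
  interpret cof_vec_space n "TYPE(real)" .
  have colsC: "set (cols A) \<subseteq> carrier_vec n" using A cols_dim by blast
  obtain S where S: "maximal S (\<lambda>T. T \<subseteq> set (cols A) \<and> lin_indpt T)"
    using maximal_exists[of "\<lambda>T. T \<subseteq> set (cols A) \<and> lin_indpt T" "card (set (cols A))" "{}"]
    by (meson List.finite_set card_mono empty_iff empty_subsetI finite_lin_indpt2 rev_finite_subset)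
  have SA: "S \<subseteq> set (cols A)" and Si: "lin_indpt S" using S unfolding maximal_def by auto
  have SC: "S \<subseteq> carrier_vec n" using SA colsC by auto
  obtain ws where ws: "set ws = S" "distinct ws"
    using finite_distinct_list SA List.finite_set finite_subset by metis
  define us where "us = gram_schmidt n ws"
  note gs = gram_schmidt_result[OF _ ws(2) _ us_def, unfolded ws(1), OF SC Si]
  show ?thesis
  proof
    show "finite (set us)" by simp
    show "set us \<subseteq> carrier_vec n" using gs by auto
    show "card (set us) = rank A"
      using gs ws rank_card_indpt[OF A S] by (metis distinct_card)
    show "span (set us) = span (set (cols A))"
      using gs(1) span_maximal_lin_indpt_subset[OF colsC S] by simp
    have "us ! i \<bullet> us ! j = 0 \<longleftrightarrow> i \<noteq> j" if "i < length us" "j < length us" for i j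
      using corthogonalD[OF gs(2) that] by simp
    then show "orthogonal_system (set us)"
      unfolding orthogonal_system_def by (auto simp: in_set_conv_nth)
  qed
qed

lemma orthogonal_expansion:
  assumes U: "finite U" "U \<subseteq> carrier_vec n" "orthogonal_system U"
    and v: "v \<in> span U" and i: "i < n"
  shows "v $ i = (\<Sum>u\<in>U. (v \<bullet> u) / (u \<bullet> u) * u $ i)"
proof -
  obtain a where v_eq: "v = lincomb a U"
    using finite_in_span[OF U(1,2) v] by auto
  have v_index: "v $ l = (\<Sum>x\<in>U. a x * x $ l)" if "l < n" for l
    unfolding v_eq using lincomb_index[OF that U(2)] .
  have coeff: "v \<bullet> u = a u * (u \<bullet> u)" if u: "u \<in> U" for u
  proof -
    have uC: "u \<in> carrier_vec n" using u U(2) by auto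
    have "v \<bullet> u = (\<Sum>l<n. (\<Sum>x\<in>U. a x * x $ l) * u $ l)"
      using v_index by (simp add: scalar_prod_carrier[OF uC])
    also have "\<dots> = (\<Sum>x\<in>U. a x * (\<Sum>l<n. x $ l * u $ l))"
      by (simp add: sum_distrib_left sum_distrib_right mult.assoc sum.swap[of _ U])
    also have "\<dots> = (\<Sum>x\<in>U. a x * (x \<bullet> u))"
      by (simp add: scalar_prod_carrier[OF uC])
    also have "\<dots> = (\<Sum>x\<in>U. if x = u then a u * (u \<bullet> u) else 0)"
      using U(3) u unfolding orthogonal_system_def by (intro sum.cong) auto
    also have "\<dots> = a u * (u \<bullet> u)"
      using U(1) u by simp
    finally show ?thesis .
  qed
  show ?thesis
    using v_index[OF i] coeff U(3) unfolding orthogonal_system_def by (auto intro!: sum.cong)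
qed

lemma Parseval_identity:
  assumes U: "finite U" "U \<subseteq> carrier_vec n" "orthogonal_system U"
    and v: "v \<in> span U"
  shows "v \<bullet> v = (\<Sum>u\<in>U. (v \<bullet> u)\<^sup>2 / (u \<bullet> u))"
proof -
  have vC: "v \<in> carrier_vec n" using v span_closed[OF U(2)] by auto
  have "v \<bullet> v = (\<Sum>i<n. v $ i * (\<Sum>u\<in>U. (v \<bullet> u) / (u \<bullet> u) * u $ i))"
    using vC orthogonal_expansion[OF U v] unfolding scalar_prod_def
    by (auto simp: atLeast0LessThan intro!: sum.cong)
  also have "\<dots> = (\<Sum>u\<in>U. (v \<bullet> u) / (u \<bullet> u) * (\<Sum>i<n. v $ i * u $ i))"
    by (auto simp: sum_distrib_left sum_distrib_right mult_ac intro: sum.swap)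
  also have "\<dots> = (\<Sum>u\<in>U. (v \<bullet> u)\<^sup>2 / (u \<bullet> u))"
    using U(2) unfolding scalar_prod_def by (auto simp: atLeast0LessThan power2_eq_square intro!: sum.cong)
  finally show ?thesis .
qed

lemma trace_eq_sum_orthogonal_system:
  assumes A: "A \<in> carrier_mat n n"
    and U: "finite U" "U \<subseteq> carrier_vec n" "orthogonal_system U"
    and cols: "set (cols A) \<subseteq> span U"
  shows "trace A = (\<Sum>u\<in>U. u \<bullet> (A *\<^sub>v u) / (u \<bullet> u))"
proof -
  have col_in_span: "col A i \<in> span U" if "i < n" for i
    using cols A that by (auto simp: cols_def)
  have "trace A = (\<Sum>i<n. \<Sum>u\<in>U. (col A i \<bullet> u) / (u \<bullet> u) * u $ i)"
    unfolding trace_def using A orthogonal_expansion[OF U col_in_span] by (auto intro!: sum.cong)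
  also have "\<dots> = (\<Sum>u\<in>U. (\<Sum>i<n. (col A i \<bullet> u) * u $ i) / (u \<bullet> u))"
    by (simp add: sum.swap[of _ U] sum_divide_distrib)
  also have "\<dots> = (\<Sum>u\<in>U. (A\<^sup>T *\<^sub>v u) \<bullet> u / (u \<bullet> u))"
    using A U(2) by (auto simp: scalar_prod_carrier row_transpose intro!: sum.cong)
  also have "\<dots> = (\<Sum>u\<in>U. u \<bullet> (A *\<^sub>v u) / (u \<bullet> u))"
    using A U(2) by (auto simp: transpose_vec_mult_scalar intro!: sum.cong)
  finally show ?thesis .
qed

lemma trace_transpose_mult_eq_sum_orthogonal_system:
  assumes A: "A \<in> carrier_mat n n"
    and U: "finite U" "U \<subseteq> carrier_vec n" "orthogonal_system U"
    and cols: "set (cols A) \<subseteq> span U"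
  shows "trace (A\<^sup>T * A) = (\<Sum>u\<in>U. (A\<^sup>T *\<^sub>v u) \<bullet> (A\<^sup>T *\<^sub>v u) / (u \<bullet> u))"
proof -
  have col_in_span: "col A i \<in> span U" if "i < n" for i
    using cols A that by (auto simp: cols_def)
  have "trace (A\<^sup>T * A) = (\<Sum>i<n. col A i \<bullet> col A i)"
    using A by (simp add: trace_def row_transpose)
  also have "\<dots> = (\<Sum>i<n. \<Sum>u\<in>U. (col A i \<bullet> u)\<^sup>2 / (u \<bullet> u))"
    using Parseval_identity[OF U col_in_span] by simp
  also have "\<dots> = (\<Sum>u\<in>U. (\<Sum>i<n. (col A i \<bullet> u)\<^sup>2) / (u \<bullet> u))"
    by (simp add: sum.swap[of _ U] sum_divide_distrib)
  also have "\<dots> = (\<Sum>u\<in>U. (A\<^sup>T *\<^sub>v u) \<bullet> (A\<^sup>T *\<^sub>v u) / (u \<bullet> u))"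
    using A by (auto simp: scalar_prod_def atLeast0LessThan row_transpose power2_eq_square
      intro!: sum.cong)
  finally show ?thesis .
qed

lemma trace_square_le_rank_mult_trace_transpose_mult:
  assumes A: "A \<in> carrier_mat n n"
  shows "(trace A)\<^sup>2 \<le> rank A * trace (A\<^sup>T * A)"
proof -
  obtain U where U: "finite U" "U \<subseteq> carrier_vec n" "orthogonal_system U"
    and card_U: "card U = rank A" and span_U: "span U = span (set (cols A))"
    using orthogonal_basis_of_col_space[OF A] .
  have cols: "set (cols A) \<subseteq> span U"
    unfolding span_U using span_mem cols_dim A by blast
  define a where "a u = u \<bullet> (A *\<^sub>v u) / (u \<bullet> u)" for u
  have a_square_le: "(a u)\<^sup>2 \<le> (A\<^sup>T *\<^sub>v u) \<bullet> (A\<^sup>T *\<^sub>v u) / (u \<bullet> u)" if u: "u \<in> U" for u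
  proof -
    have uC: "u \<in> carrier_vec n" using u U(2) by auto
    have pos: "0 < u \<bullet> u"
      using U(3) u scalar_prod_self_ge_0[of u] unfolding orthogonal_system_def by force
    have "(u \<bullet> (A *\<^sub>v u))\<^sup>2 \<le> ((A\<^sup>T *\<^sub>v u) \<bullet> (A\<^sup>T *\<^sub>v u)) * (u \<bullet> u)"
      using Cauchy_Schwarz_scalar_prod[of "A\<^sup>T *\<^sub>v u" n u] A uC
      by (simp add: transpose_vec_mult_scalar)
    then show ?thesis
      using pos unfolding a_def by (simp add: power_divide field_simps power2_eq_square)
  qed
  have "(trace A)\<^sup>2 = (\<Sum>u\<in>U. a u)\<^sup>2"
    unfolding a_def trace_eq_sum_orthogonal_system[OF A U cols] ..
  also have "\<dots> \<le> (\<Sum>u\<in>U. (a u)\<^sup>2) * card U"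
    by (rule sum_squared_le_sum_of_squares)
  also have "\<dots> \<le> (\<Sum>u\<in>U. (A\<^sup>T *\<^sub>v u) \<bullet> (A\<^sup>T *\<^sub>v u) / (u \<bullet> u)) * card U"
    by (intro mult_right_mono sum_mono a_square_le) auto
  also have "\<dots> = rank A * trace (A\<^sup>T * A)"
    unfolding trace_transpose_mult_eq_sum_orthogonal_system[OF A U cols] card_U by simp
  finally show ?thesis .
qed

lemma idempotent_fixes_col_space:
  assumes A: "A \<in> carrier_mat n n" and idem: "A * A = A"
    and v: "v \<in> span (set (cols A))"
  shows "A *\<^sub>v v = v"
proof -
  have colsC: "set (cols A) \<subseteq> carrier_vec n" using A cols_dim by blast
  obtain c where "v = lincomb_list c (cols A)"
    using v in_span_listE span_list_as_span[OF colsC] by metis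
  moreover have "lincomb_list c (cols A) = A *\<^sub>v vec n c"
    using lincomb_list_as_mat_mult[of "cols A" c] colsC A by fastforce
  ultimately show ?thesis
    using A idem by (simp add: assoc_mult_mat_vec[symmetric])
qed

lemma trace_idempotent_eq_rank:
  assumes A: "A \<in> carrier_mat n n" and idem: "A * A = A"
  shows "trace A = rank A"
proof -
  obtain U where U: "finite U" "U \<subseteq> carrier_vec n" "orthogonal_system U"
    and card_U: "card U = rank A" and span_U: "span U = span (set (cols A))"
    using orthogonal_basis_of_col_space[OF A] .
  have cols: "set (cols A) \<subseteq> span U"
    unfolding span_U using span_mem cols_dim A by blast
  have "A *\<^sub>v u = u" if "u \<in> U" for u
    using idempotent_fixes_col_space[OF A idem] span_mem[OF U(2) that] span_U by auto
  then have "trace A = (\<Sum>u\<in>U. 1)"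
    using U(3) unfolding trace_eq_sum_orthogonal_system[OF A U cols] orthogonal_system_def
    by (auto intro!: sum.cong)
  then show ?thesis using card_U by simp
qed

end

lemma sum_pick:
  assumes "finite I"
  shows "(\<Sum>i<card I. f (pick I i)) = sum f I"
proof (rule sum.reindex_bij_betw)
  have "strict_mono_on {..<card I} (pick I)"
    by (auto intro!: strict_mono_onI pick_mono)
  then have inj: "inj_on (pick I) {..<card I}"
    by (rule strict_mono_on_imp_inj_on)
  moreover have "pick I ` {..<card I} \<subseteq> I"
    by (auto intro: pick_in_set)
  moreover have "card (pick I ` {..<card I}) = card I"
    using card_image[OF inj] by simp
  ultimately show "bij_betw (pick I) {..<card I} I"
    unfolding bij_betw_def using card_subset_eq[OF assms] by blast
qed

lemma
  assumes A: "A \<in> carrier_mat n n" and I: "I \<subseteq> {..<n}"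
  shows principal_submatrix_carrier: "submatrix A I I \<in> carrier_mat (card I) (card I)"
    and index_principal_submatrix:
      "i < card I \<Longrightarrow> j < card I \<Longrightarrow> submatrix A I I $$ (i, j) = A $$ (pick I i, pick I j)"
proof -
  have dims: "dim_row A = n" "dim_col A = n"
    using A by auto
  have rows: "{k. k < n \<and> k \<in> I} = I"
    using I by blast
  show "submatrix A I I \<in> carrier_mat (card I) (card I)"
    by (rule carrier_matI) (simp_all only: dim_submatrix dims rows)
  show "i < card I \<Longrightarrow> j < card I \<Longrightarrow> submatrix A I I $$ (i, j) = A $$ (pick I i, pick I j)"
    by (rule submatrix_index) (simp_all only: dims rows)
qed

lemma pick_less:
  assumes "I \<subseteq> {..<n}" "i < card I"
  shows "pick I i < n"
  using pick_in_set[of i I] assms by auto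

lemma trace_principal_submatrix:
  assumes A: "A \<in> carrier_mat n n" and I: "I \<subseteq> {..<n}"
  shows "trace (submatrix A I I) = (\<Sum>i\<in>I. A $$ (i, i))"
proof -
  have "trace (submatrix A I I) = (\<Sum>i<card I. A $$ (pick I i, pick I i))"
    using principal_submatrix_carrier[OF A I] index_principal_submatrix[OF A I]
    by (simp add: trace_def)
  also have "\<dots> = (\<Sum>i\<in>I. A $$ (i, i))"
    using I finite_subset by (intro sum_pick) blast
  finally show ?thesis .
qed

lemma trace_transpose_mult_principal_submatrix_le:
  fixes A :: "'a::linordered_idom mat"
  assumes A: "A \<in> carrier_mat n n" and I: "I \<subseteq> {..<n}"
  defines "B \<equiv> submatrix A I I"
  shows "trace (B\<^sup>T * B) \<le> (\<Sum>i\<in>I. (A\<^sup>T * A) $$ (i, i))"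
proof -
  have fin: "finite I" using I finite_subset by blast
  have B: "B \<in> carrier_mat (card I) (card I)"
    unfolding B_def by (rule principal_submatrix_carrier[OF A I])
  have "trace (B\<^sup>T * B) = (\<Sum>i<card I. (B\<^sup>T * B) $$ (i, i))"
    using B by (simp add: trace_def)
  also have "\<dots> = (\<Sum>i<card I. \<Sum>j<card I. (A $$ (pick I j, pick I i))\<^sup>2)"
    using diag_transpose_mult_self[OF B] index_principal_submatrix[OF A I]
    unfolding B_def by simp
  also have "\<dots> = (\<Sum>i<card I. \<Sum>j\<in>I. (A $$ (j, pick I i))\<^sup>2)"
    using sum_pick[OF fin, of "\<lambda>j. (A $$ (j, _))\<^sup>2"] by simp
  also have "\<dots> \<le> (\<Sum>i<card I. \<Sum>j<n. (A $$ (j, pick I i))\<^sup>2)"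
    using I by (intro sum_mono sum_mono2) auto
  also have "\<dots> = (\<Sum>i<card I. (A\<^sup>T * A) $$ (pick I i, pick I i))"
    using diag_transpose_mult_self[OF A] pick_less[OF I] by simp
  also have "\<dots> = (\<Sum>i\<in>I. (A\<^sup>T * A) $$ (i, i))"
    by (rule sum_pick[OF fin])
  finally show ?thesis .
qed

lemma trace_principal_submatrix_le_rank:
  fixes T :: "real mat"
  assumes T: "T \<in> carrier_mat n n" and sym: "T\<^sup>T = T" and idem: "T * T = T"
    and I: "I \<subseteq> {..<n}"
  defines "B \<equiv> submatrix T I I"
  shows "trace B \<le> vec_space.rank (card I) B"
proof -
  let ?r = "real (vec_space.rank (card I) B)"
  have B: "B \<in> carrier_mat (card I) (card I)"
    unfolding B_def by (rule principal_submatrix_carrier[OF T I])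
  have "trace (B\<^sup>T * B) \<le> (\<Sum>i\<in>I. (T\<^sup>T * T) $$ (i, i))"
    unfolding B_def by (rule trace_transpose_mult_principal_submatrix_le[OF T I])
  also have "\<dots> = trace B"
    unfolding sym idem B_def by (rule trace_principal_submatrix[OF T I, symmetric])
  finally have "?r * trace (B\<^sup>T * B) \<le> ?r * trace B"
    by (rule mult_left_mono) simp
  with trace_square_le_rank_mult_trace_transpose_mult[OF B]
  have sq: "trace B * trace B \<le> ?r * trace B"
    unfolding power2_eq_square by (rule order_trans)
  show ?thesis
  proof (cases "trace B > 0")
    case True
    then show ?thesis by (rule mult_right_le_imp_le[OF sq])
  next
    case False
    then show ?thesis using of_nat_0_le_iff[of "vec_space.rank (card I) B"] by linarith
  qed
qed

theorem corollary4p12: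
  fixes T :: "real mat" and n k m :: nat and I :: "nat set"
  assumes "T \<in> carrier_mat n n"
    and "transpose_mat T = T"
    and "T * T = T"
    and "vec_space.rank n T = k"
    and "\<forall>i<n. \<forall>j<n. T $$ (i, i) = T $$ (j, j)"
    and "0 < m" and "m < n"
    and "I \<subseteq> {..<n}" and "card I = m"
  shows "real (vec_space.rank m (submatrix T I I)) \<ge> real m * real k / real n"
proof -
  define c where "c = T $$ (0, 0)"
  have "0 < n" using assms(7) by simp
  then have diag: "T $$ (i, i) = c" if "i < n" for i
    using assms(5) that unfolding c_def by blast
  have "real k = real n * c"
    using trace_idempotent_eq_rank[OF assms(1,3)] assms(1,4) diag by (simp add: trace_def)
  then have "real m * real k / real n = real m * c"
    using assms(7) by simp
  also have "\<dots> = trace (submatrix T I I)"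
    using trace_principal_submatrix[OF assms(1,8)] diag assms(8,9) by (simp add: subset_eq)
  also have "\<dots> \<le> vec_space.rank m (submatrix T I I)"
    using trace_principal_submatrix_le_rank[OF assms(1,2,3,8)] assms(9) by simp
  finally show ?thesis .
qed

end
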